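(* Let $S=(\Lambda,L)$ be a quantum Hamiltonian system on $X$ and $S'=(\Lambda',L')$ a quantum Hamiltonian system on $X'$, with embeddings $\pi:\mathcal{O}(\Lambda)\to\mathcal{O}(X')$ and $\pi':\mathcal{O}(\Lambda')\to\mathcal{O}(X)$, and suppose $S$ and $S'$ are bispectrally dual via the anti-isomorphism $b:B\to B'$. Let $f\in\mathcal{O}(\Lambda)$ and $g\in\mathcal{O}(\Lambda')$, and for $i\in\mathbb{N}$ define $$A_i=\mathrm{ad}_{L_f}^i(g)\in\mathcal{D}(X),\qquad A_i'=(-1)^i\,\mathrm{ad}_f^i(L'_g)\in\mathcal{D}(X'),$$ where $\mathrm{ad}_P(Q)=PQ-QP$, $g$ stands for $\pi'(g)$ viewed as a multiplication operator on $X$, and $f$ stands for $\pi(f)$ viewed as a multiplication operator on $X'$. Then $b(A_i)=A_i'$ for all $i\in\mathbb{N}$, and in particular $A_i=0$ for all $i>\operatorname{ord} L'_g$.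
   Context: All varieties are over an algebraically closed field $\mathbb{F}$ of characteristic zero; $\mathcal{D}(X)$ denotes the ring of differential operators on $X$ and $\mathcal{O}(X)$ its coordinate ring. A quantum Hamiltonian system (QHS) on a smooth irreducible affine variety $X$ is a pair $S=(\Lambda,L)$ where $\Lambda$ is an affine variety over $\mathbb{F}$ and $L:\mathcal{O}(\Lambda)\to\mathcal{D}(X)$, $h\mapsto L_h$, is an embedding of rings. For QHSs $S=(\Lambda,L)$ on $X$ and $S'=(\Lambda',L')$ on $X'$, suppose $X'$ covers $\Lambda$ and $X$ covers $\Lambda'$, giving natural embeddings $\pi:\mathcal{O}(\Lambda)\to\mathcal{O}(X')$ and $\pi':\mathcal{O}(\Lambda')\to\mathcal{O}(X)$; functions act on varieties as multiplication operators, so $\mathcal{O}(X)\subset\mathcal{D}(X)$. Let $B\subset\mathcal{D}(X)$ be the subring generated by the images of $L$ and $\pi'$, and $B'\subset\mathcal{D}(X')$ the subring generated by the images of $L'$ and $\pi$. $S$ and $S'$ are called bispectrally dual if there is a map $b:B\to B'$ with $b(L_h)=\pi(h)$ for all $h\in\mathcal{O}(\Lambda)$, $b(\pi'(k))=L'_k$ for all $k\in\mathcal{O}(\Lambda')$, $b(P_1P_2)=b(P_2)b(P_1)$ and $b(P_1+P_2)=b(P_1)+b(P_2)$ for all $P_1,P_2\in B$, and $b(P)=0$ iff $P=0$. *)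

theory Defs
  imports Main "HOL-Library.FuncSet" "HOL-Computational_Algebra.Polynomial"
begin

definition alg_closed :: "'k::field itself \<Rightarrow> bool" where
  "alg_closed _ \<longleftrightarrow> (\<forall>p::'k poly. degree p \<ge> 1 \<longrightarrow> (\<exists>x. poly p x = 0))"

inductive_set poly_funs :: "(('n \<Rightarrow> 'k::comm_ring_1) \<Rightarrow> 'k) set" where
  pf_const: "(\<lambda>x. c) \<in> poly_funs"
| pf_var: "(\<lambda>x. x i) \<in> poly_funs"
| pf_add: "p \<in> poly_funs \<Longrightarrow> q \<in> poly_funs \<Longrightarrow> (\<lambda>x. p x + q x) \<in> poly_funs"
| pf_mult: "p \<in> poly_funs \<Longrightarrow> q \<in> poly_funs \<Longrightarrow> (\<lambda>x. p x * q x) \<in> poly_funs"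

text \<open>Formal partial derivative of a polynomial function (well defined over an
infinite field, where polynomial functions and polynomials coincide).\<close>
inductive has_pderiv :: "(('n \<Rightarrow> 'k::comm_ring_1) \<Rightarrow> 'k) \<Rightarrow> 'n \<Rightarrow> (('n \<Rightarrow> 'k) \<Rightarrow> 'k) \<Rightarrow> bool" where
  pd_const: "has_pderiv (\<lambda>x. c) i (\<lambda>x. 0)"
| pd_var: "has_pderiv (\<lambda>x. x j) i (\<lambda>x. if i = j then 1 else 0)"
| pd_add: "has_pderiv p i p' \<Longrightarrow> has_pderiv q i q' \<Longrightarrow>
     has_pderiv (\<lambda>x. p x + q x) i (\<lambda>x. p' x + q' x)"
| pd_mult: "has_pderiv p i p' \<Longrightarrow> has_pderiv q i q' \<Longrightarrow>
     has_pderiv (\<lambda>x. p x * q x) i (\<lambda>x. p' x * q x + p x * q' x)"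

definition zero_set :: "(('n \<Rightarrow> 'k::comm_ring_1) \<Rightarrow> 'k) set \<Rightarrow> ('n \<Rightarrow> 'k) set" where
  "zero_set S = {x. \<forall>p\<in>S. p x = 0}"

definition affine_variety :: "('n::finite \<Rightarrow> 'k::field) set \<Rightarrow> bool" where
  "affine_variety V \<longleftrightarrow> (\<exists>S \<subseteq> poly_funs. V = zero_set S)"

definition vanishing_ideal :: "('n \<Rightarrow> 'k::comm_ring_1) set \<Rightarrow> (('n \<Rightarrow> 'k) \<Rightarrow> 'k) set" where
  "vanishing_ideal V = {p \<in> poly_funs. \<forall>x\<in>V. p x = 0}"

definition irreducible_variety :: "('n::finite \<Rightarrow> 'k::field) set \<Rightarrow> bool" where
  "irreducible_variety V \<longleftrightarrow> affine_variety V \<and> V \<noteq> {} \<and>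
     (\<forall>V1 V2. affine_variety V1 \<longrightarrow> affine_variety V2 \<longrightarrow> V = V1 \<union> V2 \<longrightarrow> V = V1 \<or> V = V2)"

definition variety_dim :: "('n::finite \<Rightarrow> 'k::field) set \<Rightarrow> nat" where
  "variety_dim V = Sup {m. \<exists>C :: nat \<Rightarrow> ('n \<Rightarrow> 'k) set.
      (\<forall>j\<le>m. irreducible_variety (C j) \<and> C j \<subseteq> V) \<and> (\<forall>j<m. C j \<subset> C (Suc j))}"

definition lin_indep :: "('n \<Rightarrow> 'k::field) set \<Rightarrow> bool" where
  "lin_indep W \<longleftrightarrow> finite W \<and>
     (\<forall>c. (\<lambda>i. \<Sum>w\<in>W. c w * w i) = (\<lambda>i. 0) \<longrightarrow> (\<forall>w\<in>W. c w = 0))"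

definition gradients_at :: "('n::finite \<Rightarrow> 'k::field) set \<Rightarrow> ('n \<Rightarrow> 'k) \<Rightarrow> ('n \<Rightarrow> 'k) set" where
  "gradients_at V x = {(\<lambda>i. q i x) | p q. p \<in> vanishing_ideal V \<and> (\<forall>i. has_pderiv p i (q i))}"

definition jacobian_rank :: "('n::finite \<Rightarrow> 'k::field) set \<Rightarrow> ('n \<Rightarrow> 'k) \<Rightarrow> nat" where
  "jacobian_rank V x = Sup {card W | W. W \<subseteq> gradients_at V x \<and> lin_indep W}"

definition smooth_irreducible_variety :: "('n::finite \<Rightarrow> 'k::field) set \<Rightarrow> bool" where
  "smooth_irreducible_variety V \<longleftrightarrow> irreducible_variety V \<and>
     (\<forall>x\<in>V. jacobian_rank V x = card (UNIV :: 'n set) - variety_dim V)"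

definition coord_ring :: "('n \<Rightarrow> 'k::comm_ring_1) set \<Rightarrow> (('n \<Rightarrow> 'k) \<Rightarrow> 'k) set" where
  "coord_ring V = {restrict p V | p. p \<in> poly_funs}"

definition fadd :: "'p set \<Rightarrow> ('p \<Rightarrow> 'k::comm_ring_1) \<Rightarrow> ('p \<Rightarrow> 'k) \<Rightarrow> ('p \<Rightarrow> 'k)" where
  "fadd V f g = restrict (\<lambda>x. f x + g x) V"
definition fmul :: "'p set \<Rightarrow> ('p \<Rightarrow> 'k::comm_ring_1) \<Rightarrow> ('p \<Rightarrow> 'k) \<Rightarrow> ('p \<Rightarrow> 'k)" where
  "fmul V f g = restrict (\<lambda>x. f x * g x) V"
definition fconst :: "'p set \<Rightarrow> 'k::comm_ring_1 \<Rightarrow> ('p \<Rightarrow> 'k)" where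
  "fconst V c = restrict (\<lambda>x. c) V"

definition variety_morphism ::
  "('n::finite \<Rightarrow> 'k::field) set \<Rightarrow> ('m::finite \<Rightarrow> 'k) set \<Rightarrow> (('n \<Rightarrow> 'k) \<Rightarrow> ('m \<Rightarrow> 'k)) \<Rightarrow> bool" where
  "variety_morphism V W \<phi> \<longleftrightarrow> \<phi> ` V \<subseteq> W \<and> (\<forall>j. \<exists>p\<in>poly_funs. \<forall>x\<in>V. \<phi> x j = p x)"

definition covers_via ::
  "('n::finite \<Rightarrow> 'k::field) set \<Rightarrow> ('m::finite \<Rightarrow> 'k) set
   \<Rightarrow> ((('m \<Rightarrow> 'k) \<Rightarrow> 'k) \<Rightarrow> (('n \<Rightarrow> 'k) \<Rightarrow> 'k)) \<Rightarrow> bool" where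
  "covers_via X' \<Lambda> \<pi> \<longleftrightarrow> (\<exists>\<phi>. variety_morphism X' \<Lambda> \<phi> \<and> \<phi> ` X' = \<Lambda> \<and>
      (\<forall>h\<in>coord_ring \<Lambda>. \<pi> h = restrict (h \<circ> \<phi>) X'))"

type_synonym ('n, 'k) opr = "((('n \<Rightarrow> 'k) \<Rightarrow> 'k) \<Rightarrow> (('n \<Rightarrow> 'k) \<Rightarrow> 'k))"

definition op_add :: "('n \<Rightarrow> 'k::comm_ring_1) set \<Rightarrow> ('n, 'k) opr \<Rightarrow> ('n, 'k) opr \<Rightarrow> ('n, 'k) opr" where
  "op_add X P Q = restrict (\<lambda>u. fadd X (P u) (Q u)) (coord_ring X)"
definition op_neg :: "('n \<Rightarrow> 'k::comm_ring_1) set \<Rightarrow> ('n, 'k) opr \<Rightarrow> ('n, 'k) opr" where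
  "op_neg X P = restrict (\<lambda>u. restrict (\<lambda>x. - P u x) X) (coord_ring X)"
definition op_comp :: "('n \<Rightarrow> 'k::comm_ring_1) set \<Rightarrow> ('n, 'k) opr \<Rightarrow> ('n, 'k) opr \<Rightarrow> ('n, 'k) opr" where
  "op_comp X P Q = restrict (\<lambda>u. P (Q u)) (coord_ring X)"
definition op_zero :: "('n \<Rightarrow> 'k::comm_ring_1) set \<Rightarrow> ('n, 'k) opr" where
  "op_zero X = restrict (\<lambda>u. fconst X 0) (coord_ring X)"
definition op_one :: "('n \<Rightarrow> 'k::comm_ring_1) set \<Rightarrow> ('n, 'k) opr" where
  "op_one X = restrict (\<lambda>u. u) (coord_ring X)"

definition mult_op :: "('n \<Rightarrow> 'k::comm_ring_1) set \<Rightarrow> (('n \<Rightarrow> 'k) \<Rightarrow> 'k) \<Rightarrow> ('n, 'k) opr" where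
  "mult_op X a = restrict (\<lambda>u. fmul X a u) (coord_ring X)"

definition op_ad :: "('n \<Rightarrow> 'k::comm_ring_1) set \<Rightarrow> ('n, 'k) opr \<Rightarrow> ('n, 'k) opr \<Rightarrow> ('n, 'k) opr" where
  "op_ad X P Q = op_add X (op_comp X P Q) (op_neg X (op_comp X Q P))"

definition linear_op :: "('n \<Rightarrow> 'k::comm_ring_1) set \<Rightarrow> ('n, 'k) opr \<Rightarrow> bool" where
  "linear_op X P \<longleftrightarrow> P \<in> extensional (coord_ring X) \<and> P ` coord_ring X \<subseteq> coord_ring X \<and>
     (\<forall>u\<in>coord_ring X. \<forall>v\<in>coord_ring X. P (fadd X u v) = fadd X (P u) (P v)) \<and>
     (\<forall>c. \<forall>u\<in>coord_ring X. P (fmul X (fconst X c) u) = fmul X (fconst X c) (P u))"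

fun diff_ops_ord :: "('n \<Rightarrow> 'k::comm_ring_1) set \<Rightarrow> nat \<Rightarrow> ('n, 'k) opr set" where
  "diff_ops_ord X 0 = {P. linear_op X P \<and>
       (\<forall>a\<in>coord_ring X. op_ad X P (mult_op X a) = op_zero X)}"
| "diff_ops_ord X (Suc n) = {P. linear_op X P \<and>
       (\<forall>a\<in>coord_ring X. op_ad X P (mult_op X a) \<in> diff_ops_ord X n)}"

definition diff_ops :: "('n \<Rightarrow> 'k::comm_ring_1) set \<Rightarrow> ('n, 'k) opr set" where
  "diff_ops X = (\<Union>n. diff_ops_ord X n)"

definition diff_order :: "('n \<Rightarrow> 'k::comm_ring_1) set \<Rightarrow> ('n, 'k) opr \<Rightarrow> nat" where
  "diff_order X P = (LEAST n. P \<in> diff_ops_ord X n)"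

definition QHS ::
  "('n::finite \<Rightarrow> 'k::field) set \<Rightarrow> ('m::finite \<Rightarrow> 'k) set
   \<Rightarrow> ((('m \<Rightarrow> 'k) \<Rightarrow> 'k) \<Rightarrow> ('n, 'k) opr) \<Rightarrow> bool" where
  "QHS X \<Lambda> L \<longleftrightarrow> smooth_irreducible_variety X \<and> affine_variety \<Lambda> \<and>
     L ` coord_ring \<Lambda> \<subseteq> diff_ops X \<and> inj_on L (coord_ring \<Lambda>) \<and>
     L (fconst \<Lambda> 1) = op_one X \<and>
     (\<forall>h\<in>coord_ring \<Lambda>. \<forall>h'\<in>coord_ring \<Lambda>.
        L (fadd \<Lambda> h h') = op_add X (L h) (L h') \<and>
        L (fmul \<Lambda> h h') = op_comp X (L h) (L h'))"

inductive_set gen_subring :: "('n \<Rightarrow> 'k::comm_ring_1) set \<Rightarrow> ('n, 'k) opr set \<Rightarrow> ('n, 'k) opr set"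
  for X G where
  gs_gen: "P \<in> G \<Longrightarrow> P \<in> gen_subring X G"
| gs_zero: "op_zero X \<in> gen_subring X G"
| gs_one: "op_one X \<in> gen_subring X G"
| gs_add: "P \<in> gen_subring X G \<Longrightarrow> Q \<in> gen_subring X G \<Longrightarrow> op_add X P Q \<in> gen_subring X G"
| gs_neg: "P \<in> gen_subring X G \<Longrightarrow> op_neg X P \<in> gen_subring X G"
| gs_comp: "P \<in> gen_subring X G \<Longrightarrow> Q \<in> gen_subring X G \<Longrightarrow> op_comp X P Q \<in> gen_subring X G"

definition ring_B ::
  "('n \<Rightarrow> 'k::comm_ring_1) set \<Rightarrow> ('m \<Rightarrow> 'k) set \<Rightarrow> ((('m \<Rightarrow> 'k) \<Rightarrow> 'k) \<Rightarrow> ('n, 'k) opr)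
   \<Rightarrow> ('d \<Rightarrow> 'k) set \<Rightarrow> ((('d \<Rightarrow> 'k) \<Rightarrow> 'k) \<Rightarrow> (('n \<Rightarrow> 'k) \<Rightarrow> 'k)) \<Rightarrow> ('n, 'k) opr set" where
  "ring_B X \<Lambda> L \<Lambda>' \<pi>' = gen_subring X (L ` coord_ring \<Lambda> \<union> (\<lambda>k. mult_op X (\<pi>' k)) ` coord_ring \<Lambda>')"

definition bispectrally_dual_via ::
  "('a::finite \<Rightarrow> 'k::field) set \<Rightarrow> ('c::finite \<Rightarrow> 'k) set \<Rightarrow> ((('c \<Rightarrow> 'k) \<Rightarrow> 'k) \<Rightarrow> ('a, 'k) opr)
   \<Rightarrow> ('b::finite \<Rightarrow> 'k) set \<Rightarrow> ('d::finite \<Rightarrow> 'k) set \<Rightarrow> ((('d \<Rightarrow> 'k) \<Rightarrow> 'k) \<Rightarrow> ('b, 'k) opr)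
   \<Rightarrow> ((('c \<Rightarrow> 'k) \<Rightarrow> 'k) \<Rightarrow> (('b \<Rightarrow> 'k) \<Rightarrow> 'k))
   \<Rightarrow> ((('d \<Rightarrow> 'k) \<Rightarrow> 'k) \<Rightarrow> (('a \<Rightarrow> 'k) \<Rightarrow> 'k))
   \<Rightarrow> (('a, 'k) opr \<Rightarrow> ('b, 'k) opr) \<Rightarrow> bool" where
  "bispectrally_dual_via X \<Lambda> L X' \<Lambda>' L' \<pi> \<pi>' b \<longleftrightarrow>
     (let B = ring_B X \<Lambda> L \<Lambda>' \<pi>' in
       (\<forall>h\<in>coord_ring \<Lambda>. b (L h) = mult_op X' (\<pi> h)) \<and>
       (\<forall>k\<in>coord_ring \<Lambda>'. b (mult_op X (\<pi>' k)) = L' k) \<and>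
       (\<forall>P1\<in>B. \<forall>P2\<in>B. b (op_comp X P1 P2) = op_comp X' (b P2) (b P1)) \<and>
       (\<forall>P1\<in>B. \<forall>P2\<in>B. b (op_add X P1 P2) = op_add X' (b P1) (b P2)) \<and>
       (\<forall>P\<in>B. b P = op_zero X' \<longleftrightarrow> P = op_zero X))"

end

theory Submission
  imports Defs
begin

text \<open>Since \<open>b\<close> preserves sums it preserves negatives, and since it reverses products it sends
  \<open>ad\<^bsub>L_f\<^esub>(Q) = L_f Q - Q L_f\<close> to \<open>b(Q) f - f b(Q) = ad\<^bsub>b(Q)\<^esub>(f)\<close>; iterating from
  \<open>b(g) = L'_g\<close> gives \<open>b(A\<^sub>i) = (-1)\<^sup>i ad\<^sub>f\<^sup>i(L'_g)\<close>. By Grothendieck's definition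
  \<open>P \<mapsto> ad\<^bsub>P\<^esub>(f)\<close> lowers the order of a differential operator by one and kills order zero,
  so \<open>b(A\<^sub>i) = 0\<close> for \<open>i > ord L'_g\<close>, and \<open>A\<^sub>i = 0\<close> because \<open>b\<close> has trivial kernel.\<close>

lemma poly_funs_subst:
  assumes "p \<in> poly_funs" and "\<And>j. q j \<in> poly_funs"
  shows "(\<lambda>x. p (\<lambda>j. q j x)) \<in> poly_funs"
  using assms(1)
proof induction
  case (pf_const c) then show ?case by (rule poly_funs.pf_const)
next
  case (pf_var i) then show ?case using assms(2)[of i] by simp
next
  case (pf_add p1 p2) then show ?case using poly_funs.pf_add by fastforce
next
  case (pf_mult p1 p2) then show ?case using poly_funs.pf_mult by fastforce
qed

lemma coord_ring_uminus: "u \<in> coord_ring X \<Longrightarrow> restrict (\<lambda>x. - u x) X \<in> coord_ring X"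
proof -
  assume "u \<in> coord_ring X"
  then obtain p where p: "p \<in> poly_funs" "u = restrict p X" unfolding coord_ring_def by blast
  have "(\<lambda>x. (\<lambda>x. -1) x * p x) \<in> poly_funs" by (intro poly_funs.pf_mult poly_funs.pf_const p)
  moreover have "restrict (\<lambda>x. - u x) X = restrict (\<lambda>x. (\<lambda>x. -1) x * p x) X"
    using p by (auto simp: restrict_def)
  ultimately show ?thesis unfolding coord_ring_def by blast
qed

lemma coord_ring_fmul: "a \<in> coord_ring X \<Longrightarrow> u \<in> coord_ring X \<Longrightarrow> fmul X a u \<in> coord_ring X"
proof -
  assume "a \<in> coord_ring X" "u \<in> coord_ring X"
  then obtain p q where p: "p \<in> poly_funs" "a = restrict p X" "q \<in> poly_funs" "u = restrict q X"
    unfolding coord_ring_def by blast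
  have "(\<lambda>x. p x * q x) \<in> poly_funs" by (intro poly_funs.pf_mult p)
  moreover have "fmul X a u = restrict (\<lambda>x. p x * q x) X"
    using p by (auto simp: restrict_def fmul_def)
  ultimately show ?thesis unfolding coord_ring_def by blast
qed

lemma coord_ring_fadd: "a \<in> coord_ring X \<Longrightarrow> u \<in> coord_ring X \<Longrightarrow> fadd X a u \<in> coord_ring X"
proof -
  assume "a \<in> coord_ring X" "u \<in> coord_ring X"
  then obtain p q where p: "p \<in> poly_funs" "a = restrict p X" "q \<in> poly_funs" "u = restrict q X"
    unfolding coord_ring_def by blast
  have "(\<lambda>x. p x + q x) \<in> poly_funs" by (intro poly_funs.pf_add p)
  moreover have "fadd X a u = restrict (\<lambda>x. p x + q x) X"
    using p by (auto simp: restrict_def fadd_def)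
  ultimately show ?thesis unfolding coord_ring_def by blast
qed

lemma coord_ring_fconst: "fconst X c \<in> coord_ring X"
  unfolding coord_ring_def fconst_def using poly_funs.pf_const by blast

lemma covers_via_pullback_in_coord_ring:
  assumes cv: "covers_via X' \<Lambda> \<pi>" and f: "f \<in> coord_ring \<Lambda>"
  shows "\<pi> f \<in> coord_ring X'"
proof -
  obtain \<phi> where vm: "variety_morphism X' \<Lambda> \<phi>"
    and \<pi>_eq: "\<forall>h\<in>coord_ring \<Lambda>. \<pi> h = restrict (h \<circ> \<phi>) X'"
    using cv unfolding covers_via_def by blast
  have "\<forall>j. \<exists>p\<in>poly_funs. \<forall>x\<in>X'. \<phi> x j = p x" using vm unfolding variety_morphism_def by blast
  then obtain q where q: "\<And>j. q j \<in> poly_funs" "\<And>j x. x \<in> X' \<Longrightarrow> \<phi> x j = q j x" by metis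
  have image: "\<And>x. x \<in> X' \<Longrightarrow> \<phi> x \<in> \<Lambda>" using vm unfolding variety_morphism_def by blast
  obtain p where p: "p \<in> poly_funs" "f = restrict p \<Lambda>" using f unfolding coord_ring_def by blast
  have \<phi>_eq: "\<And>x. x \<in> X' \<Longrightarrow> \<phi> x = (\<lambda>j. q j x)" using q(2) by auto
  have "\<pi> f = restrict (\<lambda>x. p (\<lambda>j. q j x)) X'"
    using \<pi>_eq f p(2) image \<phi>_eq by (auto simp: restrict_def intro!: ext)
  moreover have "(\<lambda>x. p (\<lambda>j. q j x)) \<in> poly_funs" by (rule poly_funs_subst[OF p(1) q(1)])
  ultimately show ?thesis unfolding coord_ring_def by blast
qed

definition coord_ring_endo :: "('n \<Rightarrow> 'k::comm_ring_1) set \<Rightarrow> ('n, 'k) opr \<Rightarrow> bool" where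
  "coord_ring_endo X Z \<longleftrightarrow> Z \<in> extensional (coord_ring X) \<and> Z ` coord_ring X \<subseteq> coord_ring X"

lemma coord_ring_endo_op_neg: "coord_ring_endo X Z \<Longrightarrow> coord_ring_endo X (op_neg X Z)"
  unfolding coord_ring_endo_def op_neg_def using coord_ring_uminus by auto

lemma coord_ring_endo_op_ad:
  "coord_ring_endo X P \<Longrightarrow> coord_ring_endo X Q \<Longrightarrow> coord_ring_endo X (op_ad X P Q)"
  unfolding coord_ring_endo_def op_ad_def op_add_def op_neg_def op_comp_def
  by (auto intro!: coord_ring_fadd coord_ring_uminus)

lemma coord_ring_endo_mult_op: "a \<in> coord_ring X \<Longrightarrow> coord_ring_endo X (mult_op X a)"
  unfolding coord_ring_endo_def mult_op_def using coord_ring_fmul by auto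

lemma coord_ring_endo_funpow_op_neg:
  "coord_ring_endo X Z \<Longrightarrow> coord_ring_endo X ((op_neg X ^^ i) Z)"
  by (induction i) (auto intro: coord_ring_endo_op_neg)

lemma coord_ring_endo_funpow_op_ad:
  "coord_ring_endo X P \<Longrightarrow> coord_ring_endo X Q \<Longrightarrow> coord_ring_endo X ((op_ad X P ^^ i) Q)"
  by (induction i) (auto intro: coord_ring_endo_op_ad)

lemma diff_ops_coord_ring_endo: "P \<in> diff_ops X \<Longrightarrow> coord_ring_endo X P"
proof -
  assume "P \<in> diff_ops X"
  then obtain n where "P \<in> diff_ops_ord X n" unfolding diff_ops_def by blast
  then have "linear_op X P" by (cases n) auto
  then show ?thesis unfolding linear_op_def coord_ring_endo_def by blast
qed

lemma diff_ops_ord_diff_order: "P \<in> diff_ops X \<Longrightarrow> P \<in> diff_ops_ord X (diff_order X P)"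
  unfolding diff_ops_def diff_order_def by (auto intro: LeastI)

lemma op_ad_antisym: "op_ad X Y F = op_neg X (op_ad X F Y)"
  unfolding op_ad_def op_add_def op_neg_def fadd_def
  by (rule ext) (auto simp: restrict_def)

lemma op_ad_mult_op_op_neg:
  assumes a: "a \<in> coord_ring X" and Z: "coord_ring_endo X Z"
  shows "op_ad X (mult_op X a) (op_neg X Z) = op_neg X (op_ad X (mult_op X a) Z)"
proof (rule ext)
  fix u
  show "op_ad X (mult_op X a) (op_neg X Z) u = op_neg X (op_ad X (mult_op X a) Z) u"
  proof (cases "u \<in> coord_ring X")
    case False then show ?thesis by (simp add: op_ad_def op_add_def op_neg_def)
  next
    case True
    have Zu: "Z u \<in> coord_ring X" using Z True unfolding coord_ring_endo_def by auto
    have au: "fmul X a u \<in> coord_ring X" using coord_ring_fmul[OF a True] .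
    have Zau: "Z (fmul X a u) \<in> coord_ring X" using Z au unfolding coord_ring_endo_def by auto
    show ?thesis using True Zu coord_ring_uminus[OF Zu] au Zau
      by (auto simp: op_ad_def op_add_def op_neg_def op_comp_def mult_op_def fadd_def fmul_def
          restrict_def intro!: ext)
  qed
qed

lemma op_ad_mult_op_funpow_op_neg:
  assumes a: "a \<in> coord_ring X" and Z: "coord_ring_endo X Z"
  shows "op_ad X (mult_op X a) ((op_neg X ^^ i) Z) = (op_neg X ^^ i) (op_ad X (mult_op X a) Z)"
  by (induction i)
    (simp_all add: op_ad_mult_op_op_neg[OF a coord_ring_endo_funpow_op_neg[OF Z]])

lemma funpow_op_ad_mult_op_left:
  assumes a: "a \<in> coord_ring X" and Y: "coord_ring_endo X Y"
  shows "((\<lambda>Y. op_ad X Y (mult_op X a)) ^^ i) Y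
       = (op_neg X ^^ i) ((op_ad X (mult_op X a) ^^ i) Y)"
proof (induction i)
  case 0 then show ?case by simp
next
  case (Suc i)
  have endo: "coord_ring_endo X ((op_ad X (mult_op X a) ^^ i) Y)"
    by (rule coord_ring_endo_funpow_op_ad[OF coord_ring_endo_mult_op[OF a] Y])
  have "((\<lambda>Y. op_ad X Y (mult_op X a)) ^^ Suc i) Y
     = op_neg X (op_ad X (mult_op X a) ((op_neg X ^^ i) ((op_ad X (mult_op X a) ^^ i) Y)))"
    using Suc op_ad_antisym by simp
  also have "\<dots> = op_neg X ((op_neg X ^^ i) (op_ad X (mult_op X a) ((op_ad X (mult_op X a) ^^ i) Y)))"
    using op_ad_mult_op_funpow_op_neg[OF a endo] by simp
  finally show ?case by simp
qed

lemma op_ad_op_zero_mult_op: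
  assumes a: "a \<in> coord_ring X"
  shows "op_ad X (op_zero X) (mult_op X a) = op_zero X"
proof (rule ext)
  fix u
  show "op_ad X (op_zero X) (mult_op X a) u = op_zero X u"
  proof (cases "u \<in> coord_ring X")
    case False then show ?thesis by (simp add: op_ad_def op_add_def op_zero_def)
  next
    case True
    show ?thesis using True coord_ring_fmul[OF a True] coord_ring_fconst[of X 0]
      by (auto simp: op_ad_def op_add_def op_neg_def op_comp_def mult_op_def fadd_def fmul_def
          op_zero_def fconst_def restrict_def intro!: ext)
  qed
qed

lemma funpow_op_ad_mult_op_left_diff_ops_ord:
  assumes a: "a \<in> coord_ring X"
  shows "P \<in> diff_ops_ord X n \<Longrightarrow> n < i \<Longrightarrow>
    ((\<lambda>Y. op_ad X Y (mult_op X a)) ^^ i) P = op_zero X"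
proof (induction n arbitrary: P i)
  case 0
  then obtain j where i: "i = Suc j" by (cases i) auto
  have "((\<lambda>Y. op_ad X Y (mult_op X a)) ^^ j) (op_zero X) = op_zero X"
    by (induction j) (simp_all add: op_ad_op_zero_mult_op[OF a])
  moreover have "op_ad X P (mult_op X a) = op_zero X" using 0 a by auto
  ultimately show ?case unfolding i funpow_Suc_right comp_def by simp
next
  case (Suc n)
  then obtain j where i: "i = Suc j" and j: "n < j" by (cases i) auto
  have "op_ad X P (mult_op X a) \<in> diff_ops_ord X n" using Suc.prems a by auto
  then show ?case unfolding i funpow_Suc_right comp_def using Suc.IH j by simp
qed

lemma op_neg_unique:
  assumes C: "C = op_add X C (op_zero X)" and inverse: "op_add X A C = op_zero X"
  shows "C = op_neg X A"
proof (intro ext)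
  fix u x
  show "C u x = op_neg X A u x"
  proof (cases "u \<in> coord_ring X \<and> x \<in> X")
    case True
    then have "A u x + C u x = 0"
      using fun_cong[OF fun_cong[OF inverse, of u], of x]
      by (simp add: op_add_def op_zero_def fadd_def fconst_def)
    then show ?thesis using True by (simp add: op_neg_def eq_neg_iff_add_eq_0 add.commute)
  next
    case False
    then show ?thesis
      using fun_cong[OF fun_cong[OF C, of u], of x] by (auto simp: op_add_def op_neg_def fadd_def)
  qed
qed

lemma funpow_op_ad_in_gen_subring:
  "P \<in> gen_subring X G \<Longrightarrow> Q \<in> gen_subring X G \<Longrightarrow> (op_ad X P ^^ i) Q \<in> gen_subring X G"
  by (induction i) (auto simp: op_ad_def intro!: gs_add gs_comp gs_neg)

context
  fixes X :: "('a::finite \<Rightarrow> 'k::field) set" and X' :: "('b::finite \<Rightarrow> 'k) set"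
    and \<Lambda> :: "('c::finite \<Rightarrow> 'k) set" and \<Lambda>' :: "('d::finite \<Rightarrow> 'k) set"
    and L and L' and \<pi> and \<pi>' and b
  assumes dual: "bispectrally_dual_via X \<Lambda> L X' \<Lambda>' L' \<pi> \<pi>' b"
begin

lemma bispectral_map_op_neg:
  assumes P: "P \<in> ring_B X \<Lambda> L \<Lambda>' \<pi>'"
  shows "b (op_neg X P) = op_neg X' (b P)"
proof (rule op_neg_unique)
  have zero: "op_zero X \<in> ring_B X \<Lambda> L \<Lambda>' \<pi>'" unfolding ring_B_def by (rule gs_zero)
  have negP: "op_neg X P \<in> ring_B X \<Lambda> L \<Lambda>' \<pi>'" using P unfolding ring_B_def by (rule gs_neg)
  have b_add: "b (op_add X P1 P2) = op_add X' (b P1) (b P2)"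
    if "P1 \<in> ring_B X \<Lambda> L \<Lambda>' \<pi>'" "P2 \<in> ring_B X \<Lambda> L \<Lambda>' \<pi>'" for P1 P2
    using dual that unfolding bispectrally_dual_via_def Let_def by blast
  have b_zero: "b (op_zero X) = op_zero X'"
    using dual zero unfolding bispectrally_dual_via_def Let_def by blast
  have "op_add X (op_neg X P) (op_zero X) = op_neg X P"
    by (auto simp: op_add_def op_neg_def op_zero_def fadd_def fconst_def restrict_def intro!: ext)
  then show "b (op_neg X P) = op_add X' (b (op_neg X P)) (op_zero X')"
    using b_add[OF negP zero] b_zero by simp
  have "op_add X P (op_neg X P) = op_zero X"
    by (auto simp: op_add_def op_neg_def op_zero_def fadd_def fconst_def restrict_def intro!: ext)
  then show "op_add X' (b P) (b (op_neg X P)) = op_zero X'"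
    using b_add[OF P negP] b_zero by simp
qed

lemma bispectral_map_op_ad:
  assumes P: "P \<in> ring_B X \<Lambda> L \<Lambda>' \<pi>'" and Q: "Q \<in> ring_B X \<Lambda> L \<Lambda>' \<pi>'"
  shows "b (op_ad X P Q) = op_ad X' (b Q) (b P)"
proof -
  have PQ: "op_comp X P Q \<in> ring_B X \<Lambda> L \<Lambda>' \<pi>'" and QP: "op_comp X Q P \<in> ring_B X \<Lambda> L \<Lambda>' \<pi>'"
    using P Q unfolding ring_B_def by (auto intro: gs_comp)
  have "op_neg X (op_comp X Q P) \<in> ring_B X \<Lambda> L \<Lambda>' \<pi>'"
    using QP unfolding ring_B_def by (rule gs_neg)
  then have "b (op_ad X P Q) = op_add X' (b (op_comp X P Q)) (b (op_neg X (op_comp X Q P)))"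
    using dual PQ unfolding op_ad_def bispectrally_dual_via_def Let_def by blast
  also have "\<dots> = op_add X' (op_comp X' (b Q) (b P)) (op_neg X' (op_comp X' (b P) (b Q)))"
    using dual P Q bispectral_map_op_neg[OF QP] unfolding bispectrally_dual_via_def Let_def by auto
  finally show ?thesis unfolding op_ad_def .
qed

lemma bispectral_map_funpow_op_ad:
  assumes P: "P \<in> ring_B X \<Lambda> L \<Lambda>' \<pi>'" and Q: "Q \<in> ring_B X \<Lambda> L \<Lambda>' \<pi>'"
  shows "b ((op_ad X P ^^ i) Q) = ((\<lambda>Y. op_ad X' Y (b P)) ^^ i) (b Q)"
proof (induction i)
  case 0 then show ?case by simp
next
  case (Suc i)
  have "(op_ad X P ^^ i) Q \<in> ring_B X \<Lambda> L \<Lambda>' \<pi>'"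
    using P Q unfolding ring_B_def by (rule funpow_op_ad_in_gen_subring)
  then show ?case using Suc bispectral_map_op_ad[OF P] by simp
qed

end

theorem mainTheorem1:
  fixes X :: "('a::finite \<Rightarrow> 'k::field_char_0) set"
    and X' :: "('b::finite \<Rightarrow> 'k) set"
    and \<Lambda> :: "('c::finite \<Rightarrow> 'k) set"
    and \<Lambda>' :: "('d::finite \<Rightarrow> 'k) set"
    and L :: "(('c \<Rightarrow> 'k) \<Rightarrow> 'k) \<Rightarrow> ('a, 'k) opr"
    and L' :: "(('d \<Rightarrow> 'k) \<Rightarrow> 'k) \<Rightarrow> ('b, 'k) opr"
    and \<pi> :: "(('c \<Rightarrow> 'k) \<Rightarrow> 'k) \<Rightarrow> (('b \<Rightarrow> 'k) \<Rightarrow> 'k)"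
    and \<pi>' :: "(('d \<Rightarrow> 'k) \<Rightarrow> 'k) \<Rightarrow> (('a \<Rightarrow> 'k) \<Rightarrow> 'k)"
    and b :: "('a, 'k) opr \<Rightarrow> ('b, 'k) opr"
    and f :: "('c \<Rightarrow> 'k) \<Rightarrow> 'k"
    and g :: "('d \<Rightarrow> 'k) \<Rightarrow> 'k"
  assumes "alg_closed TYPE('k)"
    and "QHS X \<Lambda> L"
    and "QHS X' \<Lambda>' L'"
    and "covers_via X' \<Lambda> \<pi>"
    and "covers_via X \<Lambda>' \<pi>'"
    and "bispectrally_dual_via X \<Lambda> L X' \<Lambda>' L' \<pi> \<pi>' b"
    and "f \<in> coord_ring \<Lambda>"
    and "g \<in> coord_ring \<Lambda>'"
  shows "(\<forall>i::nat. b ((op_ad X (L f) ^^ i) (mult_op X (\<pi>' g)))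
                   = (op_neg X' ^^ i) ((op_ad X' (mult_op X' (\<pi> f)) ^^ i) (L' g)))
       \<and> (\<forall>i::nat. i > diff_order X' (L' g) \<longrightarrow>
                   (op_ad X (L f) ^^ i) (mult_op X (\<pi>' g)) = op_zero X)"
proof -
  note dual = assms(6)[unfolded bispectrally_dual_via_def Let_def]
  let ?B = "ring_B X \<Lambda> L \<Lambda>' \<pi>'"
  let ?A = "\<lambda>i. (op_ad X (L f) ^^ i) (mult_op X (\<pi>' g))"
  have Lf: "L f \<in> ?B" and g: "mult_op X (\<pi>' g) \<in> ?B"
    unfolding ring_B_def using assms(7,8) by (auto intro: gs_gen)
  have \<pi>f: "\<pi> f \<in> coord_ring X'" using assms(4,7) by (rule covers_via_pullback_in_coord_ring)
  have L'g: "L' g \<in> diff_ops X'" using assms(3,8) unfolding QHS_def by blast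
  have b_A: "b (?A i) = ((\<lambda>Y. op_ad X' Y (mult_op X' (\<pi> f))) ^^ i) (L' g)" for i
    using bispectral_map_funpow_op_ad[OF assms(6) Lf g, of i] dual assms(7,8) by simp
  show ?thesis
  proof (intro conjI allI impI)
    show "b (?A i) = (op_neg X' ^^ i) ((op_ad X' (mult_op X' (\<pi> f)) ^^ i) (L' g))" for i
      using b_A funpow_op_ad_mult_op_left[OF \<pi>f diff_ops_coord_ring_endo[OF L'g]] by simp
    show "?A i = op_zero X" if "diff_order X' (L' g) < i" for i
    proof -
      have "b (?A i) = op_zero X'"
        using b_A funpow_op_ad_mult_op_left_diff_ops_ord[OF \<pi>f diff_ops_ord_diff_order[OF L'g] that]
        by simp
      moreover have "?A i \<in> ?B" using Lf g unfolding ring_B_def by (rule funpow_op_ad_in_gen_subring)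
      ultimately show ?thesis using dual by blast
    qed
  qed
qed

end
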